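(* Let $A_{1}\in \mathbb{C}^{m\times n}$, $b_{1}\in \mathbb{C}^{m}$, $A_{2}\in \mathbb{C}^{k\times n}$ with $r(A_{2})=k\geq 1$, and $b_{2}\in \mathbb{C}^{k}$. Let $D_{2}$ be an arbitrary but fixed matrix with $R(D_{2})=N(A_{2})$, and define \[ \Xi =\{D_{2}(A_{1}D_{2})^{\dagger}A_{1}A_{1}^{\dagger}b_{1}+(I-D_{2}(A_{1}D_{2})^{\dagger}A_{1})(A_{2}^{\dagger}b_{2}+z):z\in N(A_{2})\}. \] Assume further that $r(A_{1})=n$. Then \[ D_{2}(A_{1}D_{2})^{\dagger}A_{1}=P_{N(A_{2}),\,(A_{1}^{*}A_{1})^{-1}R(A_{2}^{*})}, \] and $\Xi$ is a singleton, \[ \Xi=\{A_{1}^{\dagger}b_{1}+(A_{1}^{*}A_{1})^{-1}A_{2}^{*}\big(A_2 (A_{1}^{*}A_{1})^{-1}A_{2}^{*}\big)^{-1}(b_{2}-A_{2}A_{1}^{\dagger}b_{1})\}. \]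
   Context: $A^{*}$ is the conjugate transpose, $A^{\dagger}$ the Moore–Penrose inverse, $r(A)$, $R(A)$, $N(A)$ the rank, range and null space of $A$. For complementary subspaces $L,M$ of $\mathbb{C}^n$ (i.e. $L+M=\mathbb{C}^n$, $L\cap M=\{0\}$), $P_{L,M}$ denotes the oblique projector onto $L$ along $M$ (the idempotent matrix with range $L$ and null space $M$). For a matrix $B$ and subspace $S$, $BS=\{Bs:s\in S\}$. (It is known that every solution of $\min_{x}\|A_1x-b_1\|^2$ subject to $A_2x=b_2$ lies in $\Xi$.) *)

theory Defs
  imports "HOL-Analysis.Analysis"
begin

definition conj_transpose :: "complex^'n^'m \<Rightarrow> complex^'m^'n" where
  "conj_transpose A = (\<chi> i j. cnj (A $ j $ i))"

definition mp_inverse :: "complex^'n^'m \<Rightarrow> complex^'m^'n" where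
  "mp_inverse A = (THE X. A ** X ** A = A \<and> X ** A ** X = X \<and>
      conj_transpose (A ** X) = A ** X \<and> conj_transpose (X ** A) = X ** A)"

definition mrange :: "complex^'n^'m \<Rightarrow> (complex^'m) set" where
  "mrange A = range (\<lambda>x. A *v x)"

definition mnull :: "complex^'n^'m \<Rightarrow> (complex^'n) set" where
  "mnull A = {x. A *v x = 0}"

definition oblique_proj :: "(complex^'n) set \<Rightarrow> (complex^'n) set \<Rightarrow> complex^'n^'n" where
  "oblique_proj L M = (THE P. P ** P = P \<and> mrange P = L \<and> mnull P = M)"

end

theory Submission
  imports Defs
begin

text \<open>Full column rank of \<open>A\<^sub>1\<close> makes the Gram matrix \<open>G = A\<^sub>1\<^sup>* A\<^sub>1\<close> invertible, and
  full row rank of \<open>A\<^sub>2\<close> then makes \<open>S = A\<^sub>2 G\<^sup>-\<^sup>1 A\<^sub>2\<^sup>*\<close> invertible, being the Gram matrix of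
  \<open>A\<^sub>1 G\<^sup>-\<^sup>1 A\<^sub>2\<^sup>*\<close>. For \<open>F = G\<^sup>-\<^sup>1 A\<^sub>2\<^sup>* S\<^sup>-\<^sup>1 A\<^sub>2\<close> the matrix \<open>I - F\<close> is idempotent with range
  \<open>N(A\<^sub>2)\<close> and null space \<open>G\<^sup>-\<^sup>1 R(A\<^sub>2\<^sup>*)\<close>, so it is the oblique projector. On the other hand
  \<open>E = D\<^sub>2 (A\<^sub>1 D\<^sub>2)\<^sup>\<dagger> A\<^sub>1\<close> fixes \<open>R(D\<^sub>2) = N(A\<^sub>2) \<supseteq> R(I - F)\<close>, since \<open>A\<^sub>1 E D\<^sub>2 = A\<^sub>1 D\<^sub>2\<close> by a
  Penrose equation and \<open>A\<^sub>1\<close> is injective, and \<open>E\<close> kills \<open>R(F)\<close>, since \<open>(A\<^sub>1 D\<^sub>2)\<^sup>\<dagger>\<close> factors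
  through \<open>(A\<^sub>1 D\<^sub>2)\<^sup>* A\<^sub>1 G\<^sup>-\<^sup>1 A\<^sub>2\<^sup>* = (A\<^sub>2 D\<^sub>2)\<^sup>* = 0\<close>. Hence \<open>E = I - F\<close>, and as \<open>F\<close> kills \<open>N(A\<^sub>2)\<close> and
  \<open>A\<^sub>2 A\<^sub>2\<^sup>\<dagger> = I\<close>, every element of \<open>\<Xi>\<close> is the stated vector.\<close>

notation conj_transpose (\<open>_\<^sup>H\<close> [1000] 1000)

lemma conj_transpose_nth [simp]: "A\<^sup>H $ i $ j = cnj (A $ j $ i)"
  by (simp add: conj_transpose_def)

lemma conj_transpose_conj_transpose [simp]: "A\<^sup>H\<^sup>H = A"
  by (simp add: vec_eq_iff)

lemma conj_transpose_mult: "(A ** B)\<^sup>H = B\<^sup>H ** A\<^sup>H"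
  unfolding conj_transpose_def matrix_matrix_mult_def
  by (simp add: vec_eq_iff cnj_sum mult.commute)

lemma conj_transpose_mat_1 [simp]: "(mat 1)\<^sup>H = mat 1"
  by (simp add: vec_eq_iff mat_def)

lemma conj_transpose_zero [simp]: "0\<^sup>H = 0"
  by (simp add: vec_eq_iff)

lemma matrix_diff_ldistrib: "(A::'a::ring_1^'n^'m) ** (B - C) = A ** B - A ** C"
  unfolding matrix_matrix_mult_def by (simp add: vec_eq_iff right_diff_distrib sum_subtractf)

lemma matrix_diff_rdistrib: "((B::'a::ring_1^'n^'m) - C) ** A = B ** A - C ** A"
  unfolding matrix_matrix_mult_def by (simp add: vec_eq_iff left_diff_distrib sum_subtractf)

definition cinner :: "complex^'n \<Rightarrow> complex^'n \<Rightarrow> complex" where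
  "cinner x y = (\<Sum>i\<in>UNIV. cnj (x $ i) * y $ i)"

lemma cinner_zero_left [simp]: "cinner 0 y = 0"
  by (simp add: cinner_def)

lemma cinner_adjoint: "cinner x (A *v y) = cinner (A\<^sup>H *v x) y"
proof -
  have "cinner x (A *v y) = (\<Sum>i\<in>UNIV. \<Sum>j\<in>UNIV. cnj (x $ i) * A $ i $ j * y $ j)"
    unfolding cinner_def matrix_vector_mult_def by (simp add: sum_distrib_left mult.assoc)
  also have "\<dots> = (\<Sum>j\<in>UNIV. \<Sum>i\<in>UNIV. cnj (x $ i) * A $ i $ j * y $ j)"
    by (rule sum.swap)
  also have "\<dots> = cinner (A\<^sup>H *v x) y"
    unfolding cinner_def matrix_vector_mult_def
    by (simp add: cnj_sum sum_distrib_left mult.commute mult.left_commute)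
  finally show ?thesis .
qed

lemma Re_cinner_self: "Re (cinner x x) = (\<Sum>i\<in>UNIV. (cmod (x $ i))\<^sup>2)"
  unfolding cinner_def Re_sum
  by (intro sum.cong refl) (metis Re_complex_of_real complex_norm_square mult.commute)

lemma Re_cinner_self_eq_0_iff: "Re (cinner x x) = 0 \<longleftrightarrow> x = 0"
  by (simp add: Re_cinner_self sum_nonneg_eq_0_iff vec_eq_iff)

lemma conj_transpose_mult_self_eq_0:
  assumes "A\<^sup>H *v (A *v x) = 0"
  shows "A *v x = 0"
proof -
  have "cinner (A *v x) (A *v x) = cinner (A\<^sup>H *v (A *v x)) x"
    by (rule cinner_adjoint)
  with assms show ?thesis
    using Re_cinner_self_eq_0_iff by fastforce
qed

lemma conj_transpose_mult_self_eq_0_matrix: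
  assumes "Y\<^sup>H ** Y = 0"
  shows "Y = 0"
proof -
  have "Y *v x = 0 *v x" for x
    using conj_transpose_mult_self_eq_0[of Y x] assms by (simp add: matrix_vector_mul_assoc)
  then show ?thesis by (simp add: matrix_eq)
qed

lemma inner_eq_Re_cinner: "x \<bullet> y = Re (cinner x y)"
  unfolding cinner_def inner_vec_def inner_complex_def by (simp add: Re_sum)

lemma linear_matrix_vector_mult_complex: "linear ((*v) (B :: complex^'n^'m))"
  by (rule linearI)
    (simp add: matrix_vector_right_distrib,
     simp add: vec_eq_iff matrix_vector_mult_def scaleR_sum_right)

lemma range_plus_adjoint_null_decomp:
  fixes B :: "complex^'n^'m"
  shows "\<exists>v z. x = B *v v + z \<and> B\<^sup>H *v z = 0"
proof -
  let ?S = "range ((*v) B)"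
  have "span ?S = ?S"
    unfolding span_eq_iff
    using linear_subspace_image[OF linear_matrix_vector_mult_complex subspace_UNIV] by simp
  moreover obtain y z where "y \<in> span ?S" and orth: "\<And>w. w \<in> span ?S \<Longrightarrow> orthogonal z w"
    and "x = y + z"
    using orthogonal_subspace_decomp_exists[of ?S x] by blast
  ultimately obtain v where x: "x = B *v v + z" by (metis rangeE)
  have "orthogonal z (B *v (B\<^sup>H *v z))"
    using orth \<open>span ?S = ?S\<close> by blast
  then have "Re (cinner (B\<^sup>H *v z) (B\<^sup>H *v z)) = 0"
    by (simp add: orthogonal_def inner_eq_Re_cinner cinner_adjoint)
  with x show ?thesis
    using Re_cinner_self_eq_0_iff by blast
qed

definition penrose :: "complex^'n^'m \<Rightarrow> complex^'m^'n \<Rightarrow> bool" where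
  "penrose A X \<longleftrightarrow> A ** X ** A = A \<and> X ** A ** X = X \<and>
     (A ** X)\<^sup>H = A ** X \<and> (X ** A)\<^sup>H = X ** A"

lemma penrose_unique:
  assumes "penrose A X" and "penrose A Y"
  shows "X = Y"
proof -
  from assms have a1: "A ** X ** A = A" and a2: "X ** A ** X = X" and a3: "(A ** X)\<^sup>H = A ** X"
    and a4: "(X ** A)\<^sup>H = X ** A" and b1: "A ** Y ** A = A" and b2: "Y ** A ** Y = Y"
    and b3: "(A ** Y)\<^sup>H = A ** Y" and b4: "(Y ** A)\<^sup>H = Y ** A"
    by (auto simp: penrose_def)
  have "X = X ** (A ** X)\<^sup>H"
    using a2 a3 by (simp add: matrix_mul_assoc)
  also have "\<dots> = X ** (A ** X)\<^sup>H ** (A ** Y)\<^sup>H"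
    by (metis b1 conj_transpose_mult matrix_mul_assoc)
  also have "\<dots> = X ** A ** Y"
    using a2 a3 b3 by (simp add: matrix_mul_assoc)
  finally have x: "X = X ** A ** Y" .
  have "Y = (Y ** A)\<^sup>H ** Y"
    using b2 b4 by (simp add: matrix_mul_assoc)
  also have "\<dots> = (X ** A)\<^sup>H ** (Y ** A)\<^sup>H ** Y"
    by (metis a1 conj_transpose_mult matrix_mul_assoc)
  also have "\<dots> = X ** A ** (Y ** A ** Y)"
    using a4 b4 by (simp add: matrix_mul_assoc)
  also have "\<dots> = X ** A ** Y"
    using b2 by simp
  finally show ?thesis
    using x by simp
qed

lemma matrix_vector_mult_axis: "(A::'a::semiring_1^'n^'m) *v axis j 1 = column j A"
  by (simp add: vec_eq_iff matrix_vector_mult_def axis_def column_def if_distrib if_distribR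
      cong: if_cong)

lemma matrix_exists_of_columns:
  fixes A :: "'a::semiring_1^'n^'m"
  assumes "\<And>j. \<exists>u. A *v u = column j B"
  shows "\<exists>U. A ** U = B"
proof -
  obtain u where u: "\<And>j. A *v u j = column j B"
    using assms by metis
  have "A ** (\<chi> i j. u j $ i) = B"
    using u by (simp add: vec_eq_iff matrix_matrix_mult_def matrix_vector_mult_def column_def)
  then show ?thesis ..
qed

lemma normal_equation_solvable_in_range:
  fixes M :: "complex^'n^'m"
  shows "\<exists>U. M\<^sup>H ** M ** M\<^sup>H ** U = M\<^sup>H"
proof (rule matrix_exists_of_columns)
  fix j
  obtain w z where wz: "axis j 1 = M *v w + z" and z: "M\<^sup>H *v z = 0"
    using range_plus_adjoint_null_decomp by blast
  obtain u n where un: "w = M\<^sup>H *v u + n" and n: "M *v n = 0"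
    using range_plus_adjoint_null_decomp[of w "M\<^sup>H"] by auto
  have "column j M\<^sup>H = M\<^sup>H *v (M *v (M\<^sup>H *v u))"
    by (simp add: matrix_vector_mult_axis[symmetric] wz z un n matrix_vector_right_distrib)
  then show "\<exists>u. M\<^sup>H ** M ** M\<^sup>H *v u = column j M\<^sup>H"
    by (metis matrix_vector_mul_assoc)
qed

lemma hermitian_if_conj_transpose_eq_gram:
  assumes "P\<^sup>H = P\<^sup>H ** P"
  shows "P\<^sup>H = P"
  by (metis assms conj_transpose_conj_transpose conj_transpose_mult)

lemma penrose_of_normal_solution:
  fixes M :: "complex^'n^'m"
  assumes normal: "M\<^sup>H ** M ** X = M\<^sup>H" and X: "X = M\<^sup>H ** U"
  shows "penrose M X"
proof -
  have MX: "(M ** X)\<^sup>H = M ** X"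
  proof (rule hermitian_if_conj_transpose_eq_gram)
    show "(M ** X)\<^sup>H = (M ** X)\<^sup>H ** (M ** X)"
      by (metis normal conj_transpose_mult matrix_mul_assoc)
  qed
  have "M = (M\<^sup>H ** M ** X)\<^sup>H"
    using normal by simp
  also have "\<dots> = M ** X ** M"
    using MX by (simp add: conj_transpose_mult matrix_mul_assoc)
  finally have MXM: "M ** X ** M = M" ..
  have "X ** M ** X = X"
  proof -
    define W where "W = U ** M ** X - U"
    have Y: "X ** M ** X - X = M\<^sup>H ** W"
      by (simp add: W_def X matrix_diff_ldistrib matrix_mul_assoc)
    have "(M\<^sup>H ** W)\<^sup>H ** (M\<^sup>H ** W) = W\<^sup>H ** (M ** (X ** M ** X - X))"
      by (simp add: Y conj_transpose_mult matrix_mul_assoc)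
    also have "\<dots> = 0"
      using MXM by (simp add: matrix_diff_ldistrib matrix_mul_assoc)
    finally have "X ** M ** X - X = 0"
      unfolding Y by (rule conj_transpose_mult_self_eq_0_matrix)
    then show ?thesis
      by simp
  qed
  moreover have "(X ** M)\<^sup>H = X ** M"
  proof (rule hermitian_if_conj_transpose_eq_gram)
    have "(X ** M)\<^sup>H ** (mat 1 - X ** M) = M\<^sup>H ** U\<^sup>H ** (M - M ** X ** M)"
      by (simp add: X conj_transpose_mult matrix_diff_ldistrib matrix_mul_assoc)
    then show "(X ** M)\<^sup>H = (X ** M)\<^sup>H ** (X ** M)"
      using MXM by (simp add: matrix_diff_ldistrib)
  qed
  ultimately show ?thesis
    using MX MXM by (simp add: penrose_def)
qed

lemma penrose_mp_inverse: "penrose A (mp_inverse A)"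
proof -
  obtain U where "A\<^sup>H ** A ** (A\<^sup>H ** U) = A\<^sup>H"
    using normal_equation_solvable_in_range by (metis matrix_mul_assoc)
  then have P: "penrose A (A\<^sup>H ** U)"
    by (rule penrose_of_normal_solution) simp
  show ?thesis
    unfolding mp_inverse_def penrose_def[symmetric]
    by (rule theI[where P="penrose A", OF P]) (rule penrose_unique[OF _ P])
qed

lemma mp_inverse_mult_eq_1:
  assumes "A ** B = mat 1"
  shows "A ** mp_inverse A = mat 1"
  by (metis assms matrix_mul_assoc matrix_mul_rid penrose_def penrose_mp_inverse)

lemma mp_inverse_eq_factor:
  "mp_inverse A = mp_inverse A ** (mp_inverse A)\<^sup>H ** A\<^sup>H"
  by (metis conj_transpose_mult matrix_mul_assoc penrose_def penrose_mp_inverse)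

lemma full_column_rank_injective:
  fixes A :: "'a::field^'n^'m"
  assumes "rank A = CARD('n)" and "A *v x = 0"
  shows "x = 0"
proof -
  have "vec.span (rows A) = UNIV"
    using assms(1) unfolding row_rank_def_gen
    by (metis vec.dim_eq_full vec.dim_UNIV vec.dimension_def vec_dim_card)
  then show ?thesis
    using assms(2) matrix_left_invertible_span_rows_gen matrix_left_invertible_ker by metis
qed

text \<open>Row rank equals column rank is only available over the reals in the library, so full row
  rank is turned directly into linear independence of the (necessarily distinct) rows.\<close>

lemma full_row_rank_right_invertible:
  fixes A :: "'a::field^'n^'m"
  assumes "rank A = CARD('m)"
  shows "\<exists>B. A ** B = mat 1"
  unfolding matrix_right_invertible_independent_rows
proof (intro allI impI)
  fix c :: "'m \<Rightarrow> 'a" and i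
  assume c: "(\<Sum>i\<in>UNIV. c i *s row i A) = 0"
  let ?r = "\<lambda>i. row i A"
  have rows: "rows A = range ?r"
    by (auto simp: rows_def)
  then have fin: "finite (rows A)"
    by simp
  have "card (rows A) \<le> CARD('m)"
    unfolding rows by (rule card_image_le) simp
  moreover have "vec.dim (rows A) \<le> card (rows A)"
    using fin by (intro vec.dim_le_card) (auto intro: vec.span_base)
  ultimately have card: "card (rows A) = vec.dim (rows A)" "card (range ?r) = CARD('m)"
    using assms unfolding row_rank_def_gen rows by linarith+
  have indep: "vec.independent (rows A)"
    using vec.card_eq_dim[OF subset_refl card(1) fin] by (auto intro: vec.span_base)
  have inj: "inj ?r"
    using card(2) by (simp add: eq_card_imp_inj_on)
  have "(\<Sum>v\<in>rows A. c (inv ?r v) *s v) = 0"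
    unfolding rows using c inj by (simp add: sum.reindex inv_f_f[OF inj])
  then have "c (inv ?r (?r i)) = 0"
    using indep unfolding vec.independent_explicit rows
    by (elim conjE allE[where x="\<lambda>v. c (inv ?r v)"]) auto
  then show "c i = 0"
    by (simp add: inv_f_f[OF inj])
qed

lemma conj_transpose_injective_if_right_invertible:
  assumes "A ** B = mat 1" and "A\<^sup>H *v y = 0"
  shows "y = 0"
proof -
  have "y = (A ** B)\<^sup>H *v y"
    using assms(1) by simp
  also have "\<dots> = 0"
    using assms(2) by (simp add: conj_transpose_mult flip: matrix_vector_mul_assoc)
  finally show ?thesis .
qed

lemma invertible_matrix_inv:
  assumes "invertible A"
  shows "A ** matrix_inv A = mat 1" and "matrix_inv A ** A = mat 1"
  using someI_ex[OF assms[unfolded invertible_def]] by (simp_all add: matrix_inv_def)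

lemma invertible_iff_ker_trivial:
  fixes A :: "'a::field^'n^'n"
  shows "invertible A \<longleftrightarrow> (\<forall>x. A *v x = 0 \<longrightarrow> x = 0)"
  by (simp add: invertible_left_inverse matrix_left_invertible_ker)

lemma invertible_gram:
  fixes Y :: "complex^'n^'m"
  assumes "\<And>x. Y *v x = 0 \<Longrightarrow> x = 0"
  shows "invertible (Y\<^sup>H ** Y)"
  unfolding invertible_iff_ker_trivial
  using assms conj_transpose_mult_self_eq_0 by (metis matrix_vector_mul_assoc)

lemma conj_transpose_matrix_inv_hermitian:
  assumes "invertible G" and "G\<^sup>H = G"
  shows "(matrix_inv G)\<^sup>H = matrix_inv G"
proof -
  have "(matrix_inv G)\<^sup>H = (matrix_inv G)\<^sup>H ** G\<^sup>H ** matrix_inv G"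
    using invertible_matrix_inv(1)[OF assms(1)] assms(2) by (simp add: matrix_mul_assoc[symmetric])
  also have "\<dots> = matrix_inv G"
    using invertible_matrix_inv(1)[OF assms(1)] by (simp flip: conj_transpose_mult)
  finally show ?thesis .
qed

lemma idempotent_eqI:
  fixes P Q :: "complex^'n^'n"
  assumes "P ** P = P" "Q ** Q = Q" "mrange P = mrange Q" "mnull P = mnull Q"
  shows "P = Q"
proof -
  have "P *v x = Q *v x" for x
  proof -
    have "Q *v (x - Q *v x) = 0"
      using assms(2) by (simp add: matrix_vector_mult_diff_distrib matrix_vector_mul_assoc)
    then have "x - Q *v x \<in> mnull P"
      using assms(4) by (simp add: mnull_def)
    then have "P *v x = P *v (Q *v x)"
      by (simp add: mnull_def matrix_vector_mult_diff_distrib)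
    also have "\<dots> = Q *v x"
    proof -
      have "Q *v x \<in> mrange P"
        using assms(3) by (simp add: mrange_def)
      then obtain w where "Q *v x = P *v w"
        by (auto simp: mrange_def)
      then show ?thesis
        using assms(1) by (simp add: matrix_vector_mul_assoc)
    qed
    finally show ?thesis .
  qed
  then show ?thesis
    by (simp add: matrix_eq)
qed

lemma oblique_proj_eqI:
  assumes "P ** P = P" "mrange P = L" "mnull P = M"
  shows "oblique_proj L M = P"
  unfolding oblique_proj_def
  using assms idempotent_eqI by (intro the_equality) auto

lemma weighted_projector_left:
  assumes "invertible (A ** W ** A\<^sup>H)"
  shows "A ** (W ** A\<^sup>H ** matrix_inv (A ** W ** A\<^sup>H) ** A) = A"
  using invertible_matrix_inv(1)[OF assms] by (simp add: matrix_mul_assoc)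

lemma oblique_proj_weighted:
  fixes A :: "complex^'n^'k" and W :: "complex^'n^'n"
  assumes S: "invertible (A ** W ** A\<^sup>H)"
  shows "oblique_proj (mnull A) ((\<lambda>x. W *v x) ` mrange A\<^sup>H) =
           mat 1 - W ** A\<^sup>H ** matrix_inv (A ** W ** A\<^sup>H) ** A"
    (is "_ = mat 1 - ?F")
proof (rule oblique_proj_eqI)
  have AF: "A ** ?F = A"
    using weighted_projector_left[OF S] .
  then have "?F ** ?F = ?F"
    by (metis matrix_mul_assoc)
  then show "(mat 1 - ?F) ** (mat 1 - ?F) = mat 1 - ?F"
    by (simp add: matrix_diff_ldistrib matrix_diff_rdistrib)
  show "mrange (mat 1 - ?F) = mnull A"
  proof (intro set_eqI iffI)
    fix y assume "y \<in> mrange (mat 1 - ?F)"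
    then show "y \<in> mnull A"
      using AF by (auto simp: mrange_def mnull_def matrix_vector_mul_assoc matrix_diff_ldistrib)
  next
    fix y assume "y \<in> mnull A"
    then have "(mat 1 - ?F) *v y = y"
      by (simp add: mnull_def matrix_vector_mult_diff_rdistrib flip: matrix_vector_mul_assoc)
    then show "y \<in> mrange (mat 1 - ?F)"
      unfolding mrange_def by (metis rangeI)
  qed
  show "mnull (mat 1 - ?F) = (\<lambda>x. W *v x) ` mrange A\<^sup>H"
  proof (intro set_eqI iffI)
    fix x assume "x \<in> mnull (mat 1 - ?F)"
    then have "x = W *v (A\<^sup>H *v (matrix_inv (A ** W ** A\<^sup>H) *v (A *v x)))"
      by (simp add: mnull_def matrix_vector_mult_diff_rdistrib matrix_vector_mul_assoc
          matrix_mul_assoc)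
    then show "x \<in> (\<lambda>x. W *v x) ` mrange A\<^sup>H"
      unfolding mrange_def by blast
  next
    fix x assume "x \<in> (\<lambda>x. W *v x) ` mrange A\<^sup>H"
    then obtain v where x: "x = (W ** A\<^sup>H) *v v"
      by (auto simp: mrange_def matrix_vector_mul_assoc)
    have "?F ** (W ** A\<^sup>H) = W ** A\<^sup>H ** (matrix_inv (A ** W ** A\<^sup>H) ** (A ** W ** A\<^sup>H))"
      by (simp add: matrix_mul_assoc)
    then have "?F ** (W ** A\<^sup>H) = W ** A\<^sup>H"
      by (simp add: invertible_matrix_inv(2)[OF S])
    then show "x \<in> mnull (mat 1 - ?F)"
      by (simp add: x mnull_def matrix_vector_mult_diff_rdistrib matrix_vector_mul_assoc)
  qed
qed

lemma mp_projector_fixes_range: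
  assumes inj: "\<And>x. A *v x = 0 \<Longrightarrow> x = 0"
  shows "(D ** mp_inverse (A ** D) ** A) *v (D *v w) = D *v w"
proof -
  have "A *v ((D ** mp_inverse (A ** D) ** A) *v (D *v w)) =
      (A ** D ** mp_inverse (A ** D) ** (A ** D)) *v w"
    by (simp add: matrix_vector_mul_assoc matrix_mul_assoc)
  also have "\<dots> = A *v (D *v w)"
    using penrose_mp_inverse[of "A ** D"]
    by (simp add: penrose_def matrix_vector_mul_assoc matrix_mul_assoc)
  finally have "A *v ((D ** mp_inverse (A ** D) ** A) *v (D *v w) - D *v w) = 0"
    by (simp add: matrix_vector_mult_diff_distrib)
  then have "(D ** mp_inverse (A ** D) ** A) *v (D *v w) - D *v w = 0"
    by (rule inj)
  then show ?thesis
    by simp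
qed

lemma mp_projector_annihilates:
  assumes W: "A\<^sup>H ** A ** W = mat 1" and CD: "C ** D = 0"
  shows "D ** mp_inverse (A ** D) ** A ** W ** C\<^sup>H = 0"
proof -
  have "(A ** D)\<^sup>H ** A ** W ** C\<^sup>H = D\<^sup>H ** (A\<^sup>H ** A ** W) ** C\<^sup>H"
    by (simp add: conj_transpose_mult matrix_mul_assoc)
  also have "\<dots> = (C ** D)\<^sup>H"
    using W by (simp add: conj_transpose_mult)
  finally have "(A ** D)\<^sup>H ** A ** W ** C\<^sup>H = 0"
    using CD by simp
  moreover have "D ** mp_inverse (A ** D) ** A ** W ** C\<^sup>H =
      D ** mp_inverse (A ** D) ** (mp_inverse (A ** D))\<^sup>H ** ((A ** D)\<^sup>H ** A ** W ** C\<^sup>H)"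
    by (subst mp_inverse_eq_factor) (simp add: matrix_mul_assoc)
  ultimately show ?thesis
    by simp
qed

lemma mp_projector_eq_weighted:
  fixes A :: "complex^'n^'m" and C :: "complex^'n^'k" and D :: "complex^'p^'n"
  assumes inj: "\<And>x. A *v x = 0 \<Longrightarrow> x = 0"
    and D: "mrange D = mnull C"
    and W: "A\<^sup>H ** A ** W = mat 1"
    and S: "invertible (C ** W ** C\<^sup>H)"
  shows "D ** mp_inverse (A ** D) ** A =
           mat 1 - W ** C\<^sup>H ** matrix_inv (C ** W ** C\<^sup>H) ** C"
    (is "?E = mat 1 - ?F")
proof -
  have "?E *v ((mat 1 - ?F) *v x) = (mat 1 - ?F) *v x" for x
  proof -
    have "C *v ((mat 1 - ?F) *v x) = 0"
      using weighted_projector_left[OF S]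
      by (simp add: matrix_vector_mul_assoc matrix_diff_ldistrib)
    then obtain w where "(mat 1 - ?F) *v x = D *v w"
      using D by (auto simp: mnull_def mrange_def)
    then show ?thesis
      using mp_projector_fixes_range[OF inj] by simp
  qed
  then have fixes_complement: "?E ** (mat 1 - ?F) = mat 1 - ?F"
    by (simp add: matrix_eq matrix_vector_mul_assoc)
  have "C ** D = 0"
    using D by (auto simp: matrix_eq mnull_def mrange_def simp flip: matrix_vector_mul_assoc)
  then have annihilates: "?E ** ?F = 0"
    by (simp add: mp_projector_annihilates[OF W] matrix_mul_assoc)
  have "?E = ?E ** ((mat 1 - ?F) + ?F)"
    by simp
  also have "\<dots> = mat 1 - ?F"
    unfolding matrix_add_ldistrib fixes_complement annihilates by simp
  finally show ?thesis .
qed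

lemma invertible_weighted_gram:
  fixes A1 :: "complex^'n^'m" and A2 :: "complex^'n^'k"
  assumes inj1: "\<And>x. A1 *v x = 0 \<Longrightarrow> x = 0"
    and inj2: "\<And>y. A2\<^sup>H *v y = 0 \<Longrightarrow> y = 0"
  shows "invertible (A2 ** matrix_inv (A1\<^sup>H ** A1) ** A2\<^sup>H)"
proof -
  define G where "G = A1\<^sup>H ** A1"
  have G: "invertible G"
    unfolding G_def using inj1 by (rule invertible_gram)
  have GH: "(matrix_inv G)\<^sup>H = matrix_inv G"
    using G by (rule conj_transpose_matrix_inv_hermitian) (simp add: G_def conj_transpose_mult)
  define Y where "Y = A1 ** matrix_inv G ** A2\<^sup>H"
  have "Y\<^sup>H ** Y = (matrix_inv G ** A2\<^sup>H)\<^sup>H ** G ** (matrix_inv G ** A2\<^sup>H)"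
    unfolding Y_def G_def by (simp add: conj_transpose_mult matrix_mul_assoc)
  also have "\<dots> = A2 ** matrix_inv G ** (G ** matrix_inv G) ** A2\<^sup>H"
    by (simp add: conj_transpose_mult GH matrix_mul_assoc)
  finally have gram: "Y\<^sup>H ** Y = A2 ** matrix_inv G ** A2\<^sup>H"
    by (simp add: invertible_matrix_inv(1)[OF G])
  have "y = 0" if "Y *v y = 0" for y
  proof -
    have "matrix_inv G *v (A2\<^sup>H *v y) = 0"
      using that by (intro inj1) (simp add: Y_def matrix_vector_mul_assoc matrix_mul_assoc)
    then have "A2\<^sup>H *v y = 0"
      by (metis invertible_matrix_inv(1)[OF G] matrix_vector_mul_assoc matrix_vector_mul_lid
          matrix_vector_mult_0_right)
    then show ?thesis
      by (rule inj2)
  qed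
  then show ?thesis
    using invertible_gram[of Y] by (simp add: gram G_def)
qed

theorem corollary3:
  fixes A1 :: "complex^'n^'m" and b1 :: "complex^'m"
    and A2 :: "complex^'n^'k" and b2 :: "complex^'k"
    and D2 :: "complex^'p^'n"
  assumes rankA2: "rank A2 = CARD('k)"
    and D2: "mrange D2 = mnull A2"
    and rankA1: "rank A1 = CARD('n)"
  shows "D2 ** mp_inverse (A1 ** D2) ** A1 =
           oblique_proj (mnull A2)
             ((\<lambda>x. matrix_inv (conj_transpose A1 ** A1) *v x) ` mrange (conj_transpose A2))
       \<and> {D2 ** mp_inverse (A1 ** D2) ** A1 ** mp_inverse A1 *v b1
            + (mat 1 - D2 ** mp_inverse (A1 ** D2) ** A1) *v (mp_inverse A2 *v b2 + z) | z.
            z \<in> mnull A2}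
         = {mp_inverse A1 *v b1
            + (matrix_inv (conj_transpose A1 ** A1) ** conj_transpose A2
               ** matrix_inv (A2 ** matrix_inv (conj_transpose A1 ** A1) ** conj_transpose A2))
              *v (b2 - A2 *v (mp_inverse A1 *v b1))}"
proof -
  define W where "W = matrix_inv (A1\<^sup>H ** A1)"
  define K where "K = W ** A2\<^sup>H ** matrix_inv (A2 ** W ** A2\<^sup>H)"
  have inj1: "\<And>x. A1 *v x = 0 \<Longrightarrow> x = 0"
    using full_column_rank_injective[OF rankA1] .
  obtain B2 where B2: "A2 ** B2 = mat 1"
    using full_row_rank_right_invertible[OF rankA2] ..
  have S: "invertible (A2 ** W ** A2\<^sup>H)"
    unfolding W_def using inj1 conj_transpose_injective_if_right_invertible[OF B2]
    by (rule invertible_weighted_gram)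
  have E: "D2 ** mp_inverse (A1 ** D2) ** A1 = mat 1 - K ** A2"
    unfolding K_def W_def
    using mp_projector_eq_weighted[where A=A1 and C=A2 and D=D2, OF inj1 D2
        invertible_matrix_inv(1)[OF invertible_gram[OF inj1]] S[unfolded W_def]]
    by (simp add: matrix_mul_assoc)
  have A2b2: "A2 *v (mp_inverse A2 *v b2) = b2"
    using mp_inverse_mult_eq_1[OF B2] by (simp add: matrix_vector_mul_assoc)
  define c where "c = mp_inverse A1 *v b1 + K *v (b2 - A2 *v (mp_inverse A1 *v b1))"
  have element_eq:
    "(mat 1 - K ** A2) ** mp_inverse A1 *v b1 + K ** A2 *v (mp_inverse A2 *v b2 + z) = c"
    if "z \<in> mnull A2" for z
    using that A2b2
    by (simp add: c_def mnull_def matrix_vector_mult_diff_rdistrib matrix_vector_right_distrib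
        matrix_vector_mult_diff_distrib matrix_vector_mul_assoc[symmetric] matrix_mul_assoc)
  have "0 \<in> mnull A2"
    by (simp add: mnull_def)
  then have "{(mat 1 - K ** A2) ** mp_inverse A1 *v b1 + K ** A2 *v (mp_inverse A2 *v b2 + z) | z.
      z \<in> mnull A2} = {c}"
    using element_eq by blast
  then show ?thesis
    using oblique_proj_weighted[OF S] E by (simp add: c_def K_def W_def)
qed

end
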